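(* Let $n\ge1$, identify $\mathbb{R}^{n+1}=\mathbb{R}^n\times\mathbb{R}$, let $f\colon\mathbb{R}^n\to(0,\infty)$ be continuous with epigraph $L=\{(x,y)\mid f(x)\le y\}$, and let $K\subset\mathbb{R}^{n+1}$ be a nonempty closed set with $K\cap L=\emptyset$ containing a point $(x_*,y_* )$ with $y_*\le 0$. Then the upper equidistant function $G^+$ associated with $K$ and $L$ is upper semi-continuous and the lower equidistant function $G^-$ is lower semi-continuous on $\mathbb{R}^n$.
   Context: $d(p,A)=\inf\{|p-q|\mid q\in A\}$ (Euclidean distance). $G^+(x)=\sup\{y\in\mathbb{R}\mid d((x,y),K)=d((x,y),L)\}$ and $G^-(x)=\inf\{y\in\mathbb{R}\mid d((x,y),K)=d((x,y),L)\}$ (under the stated assumptions these sets are nonempty and bounded, so $G^\pm(x)$ are real numbers). *)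

theory Defs
  imports "HOL-Analysis.Analysis"
begin

text \<open>Points of R^(n+1) are pairs (x,y) with x in R^n and y in R; the product
  norm on 'a \<times> real is the Euclidean norm. d(p,A) is infdist p A.\<close>

definition G_plus :: "('a::euclidean_space \<times> real) set \<Rightarrow> ('a \<times> real) set \<Rightarrow> 'a \<Rightarrow> real" where
  "G_plus K L x = Sup {y. infdist (x, y) K = infdist (x, y) L}"

definition G_minus :: "('a::euclidean_space \<times> real) set \<Rightarrow> ('a \<times> real) set \<Rightarrow> 'a \<Rightarrow> real" where
  "G_minus K L x = Inf {y. infdist (x, y) K = infdist (x, y) L}"

definition upper_semicontinuous :: "('a::topological_space \<Rightarrow> real) \<Rightarrow> bool" where
  "upper_semicontinuous g \<longleftrightarrow> (\<forall>a. open {x. g x < a})"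

definition lower_semicontinuous :: "('a::topological_space \<Rightarrow> real) \<Rightarrow> bool" where
  "lower_semicontinuous g \<longleftrightarrow> (\<forall>a. open {x. g x > a})"

end

theory Submission
  imports Defs
begin

text \<open>The equidistant set \<open>E = {p. d(p,K) = d(p,L)}\<close> is closed, and its fibre over every
  \<open>x\<close> is nonempty and bounded: from above by \<open>f x\<close>, because points of \<open>L\<close> have distance
  \<open>0\<close> to \<open>L\<close> but not to the closed set \<open>K\<close>; from below, locally uniformly in \<open>x\<close>,
  because far below the graph a fixed point of \<open>K\<close> at height \<open>\<le> 0\<close> is closer than the
  epigraph of the positive function \<open>f\<close>. So \<open>G\<^sup>+ x\<close> is the largest point of a closed
  fibre, and the superlevel set \<open>{G\<^sup>+ \<ge> a}\<close> meets each compact \<open>C\<close> in the projection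
  of the compact set \<open>E \<inter> C \<times> [a, b]\<close>; hence it is closed. Reflecting \<open>y \<mapsto> -y\<close> turns
  \<open>G\<^sup>-\<close> into \<open>-G\<^sup>+\<close>.\<close>

lemma closed_if_closed_Int_compact:
  fixes S :: "'a::heine_borel set"
  assumes "\<And>C. compact C \<Longrightarrow> closed (S \<inter> C)"
  shows "closed S"
proof -
  have k: "k_space (euclidean :: 'a topology)"
    by (rule locally_compact_imp_k_space[OF locally_compact_space_euclidean])
  have "closedin (top_of_set C) (C \<inter> S)" if "compactin euclidean C" for C
  proof -
    have "closedin (top_of_set C) (C \<inter> (S \<inter> C))"
      using that assms by (intro closedin_closed_Int) simp
    then show ?thesis
      by (simp add: Int_commute Int_left_commute)
  qed
  then have "closedin euclidean S"
    using k[unfolded k_space, rule_format, of S] by simp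
  then show ?thesis
    by (simp only: closed_closedin)
qed

lemma closed_fibre_contains_Sup:
  fixes E :: "('a::topological_space \<times> real) set"
  assumes "closed E" "\<exists>y. (x, y) \<in> E" "bdd_above {y. (x, y) \<in> E}"
  shows "(x, Sup {y. (x, y) \<in> E}) \<in> E"
proof -
  have "closed (Pair x -` E)"
    by (intro continuous_closed_vimage assms(1) continuous_intros)
  then show ?thesis
    using closed_contains_Sup[of "Pair x -` E"] assms(2,3) by (simp add: vimage_def)
qed

lemma superlevel_Int_eq_fst_image:
  fixes g :: "'a \<Rightarrow> real"
  assumes g_in: "\<And>x. (x, g x) \<in> E"
    and g_upper: "\<And>x y. (x, y) \<in> E \<Longrightarrow> y \<le> g x"
    and b: "\<And>x y. (x, y) \<in> E \<Longrightarrow> x \<in> C \<Longrightarrow> y \<le> b"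
  shows "{x. a \<le> g x} \<inter> C = fst ` (E \<inter> C \<times> {a..b})"
proof
  show "{x. a \<le> g x} \<inter> C \<subseteq> fst ` (E \<inter> C \<times> {a..b})"
  proof
    fix x
    assume "x \<in> {x. a \<le> g x} \<inter> C"
    then have "(x, g x) \<in> E \<inter> C \<times> {a..b}"
      using g_in[of x] b[OF g_in] by simp
    then show "x \<in> fst ` (E \<inter> C \<times> {a..b})"
      by (rule rev_image_eqI) simp
  qed
  show "fst ` (E \<inter> C \<times> {a..b}) \<subseteq> {x. a \<le> g x} \<inter> C"
  proof
    fix x
    assume "x \<in> fst ` (E \<inter> C \<times> {a..b})"
    then obtain y where "(x, y) \<in> E" "x \<in> C" "a \<le> y"
      by force
    then show "x \<in> {x. a \<le> g x} \<inter> C"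
      using g_upper[of x y] by simp
  qed
qed

lemma upper_semicontinuous_Sup_fibres:
  fixes E :: "('a::heine_borel \<times> real) set"
  assumes E_closed: "closed E"
    and fibre_ne: "\<And>x. \<exists>y. (x, y) \<in> E"
    and bdd: "\<And>C. compact C \<Longrightarrow> bdd_above (snd ` (E \<inter> C \<times> UNIV))"
  shows "upper_semicontinuous (\<lambda>x. Sup {y. (x, y) \<in> E})"
proof -
  define g where "g x = Sup {y. (x, y) \<in> E}" for x
  have fibre_bdd: "bdd_above {y. (x, y) \<in> E}" for x
  proof -
    have "{y. (x, y) \<in> E} = snd ` (E \<inter> {x} \<times> UNIV)"
      by (auto intro: rev_image_eqI)
    then show ?thesis
      using bdd[of "{x}"] by simp
  qed
  have g_upper: "y \<le> g x" if "(x, y) \<in> E" for x y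
    unfolding g_def using that fibre_bdd by (intro cSup_upper) auto
  have g_in: "(x, g x) \<in> E" for x
    unfolding g_def using E_closed fibre_ne fibre_bdd by (rule closed_fibre_contains_Sup)
  have "closed {x. a \<le> g x}" for a
  proof (rule closed_if_closed_Int_compact)
    fix C :: "'a set"
    assume C: "compact C"
    obtain b where b: "\<forall>p\<in>E \<inter> C \<times> UNIV. snd p \<le> b"
      using bdd[OF C] by (auto simp: bdd_above_def)
    have "y \<le> b" if "(x, y) \<in> E" "x \<in> C" for x y
      using b[rule_format, of "(x, y)"] that by simp
    then have "{x. a \<le> g x} \<inter> C = fst ` (E \<inter> C \<times> {a..b})"
      using superlevel_Int_eq_fst_image[where g = g, OF g_in g_upper] by blast
    moreover have "compact (E \<inter> C \<times> {a..b})"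
      using E_closed C by (intro closed_Int_compact compact_Times compact_Icc)
    then have "compact (fst ` (E \<inter> C \<times> {a..b}))"
      by (intro compact_continuous_image continuous_on_fst continuous_on_id)
    ultimately show "closed ({x. a \<le> g x} \<inter> C)"
      by (simp add: compact_imp_closed)
  qed
  moreover have "{x. g x < a} = - {x. a \<le> g x}" for a
    by auto
  ultimately show ?thesis
    unfolding upper_semicontinuous_def g_def[symmetric] by (simp add: open_Compl)
qed

lemma lower_semicontinuous_Inf_fibres:
  fixes E :: "('a::heine_borel \<times> real) set"
  assumes E_closed: "closed E"
    and fibre_ne: "\<And>x. \<exists>y. (x, y) \<in> E"
    and bdd: "\<And>C. compact C \<Longrightarrow> bdd_below (snd ` (E \<inter> C \<times> UNIV))"
  shows "lower_semicontinuous (\<lambda>x. Inf {y. (x, y) \<in> E})"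
proof -
  define E' where "E' = (\<lambda>(x, y). (x, - y)) -` E"
  have "upper_semicontinuous (\<lambda>x. Sup {y. (x, y) \<in> E'})"
  proof (rule upper_semicontinuous_Sup_fibres)
    show "closed E'"
      unfolding E'_def by (intro continuous_closed_vimage E_closed) (simp add: case_prod_beta')
    show "\<exists>y. (x, y) \<in> E'" for x
    proof -
      obtain y where "(x, y) \<in> E"
        using fibre_ne by blast
      then have "(x, - y) \<in> E'"
        by (simp add: E'_def)
      then show ?thesis ..
    qed
    show "bdd_above (snd ` (E' \<inter> C \<times> UNIV))" if "compact C" for C
    proof -
      have "snd ` (E' \<inter> C \<times> UNIV) = (\<lambda>p. - snd p) ` (E \<inter> C \<times> UNIV)"
        unfolding E'_def by (auto intro: rev_image_eqI[where x = "(_, - _)"])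
      then show ?thesis
        using bdd[OF that] by (simp add: bdd_above_uminus_image)
    qed
  qed
  moreover have "Inf {y. (x, y) \<in> E} = - Sup {y. (x, y) \<in> E'}" for x
  proof -
    have "uminus ` {y. (x, y) \<in> E} = {y. (x, y) \<in> E'}"
      unfolding E'_def by (auto intro: rev_image_eqI[where x = "- _"])
    then show ?thesis by (simp add: Inf_real_def)
  qed
  moreover have "{x. a < - Sup {y. (x, y) \<in> E'}} = {x. Sup {y. (x, y) \<in> E'} < - a}" for a
    by auto
  ultimately have "open {x. a < Inf {y. (x, y) \<in> E}}" for a
    unfolding upper_semicontinuous_def by simp
  then show ?thesis
    unfolding lower_semicontinuous_def by blast
qed

definition equidistant_set :: "'a::metric_space set \<Rightarrow> 'a set \<Rightarrow> 'a set" where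
  "equidistant_set K L = {p. infdist p K = infdist p L}"

lemma closed_equidistant_set: "closed (equidistant_set K L)"
  unfolding equidistant_set_def by (intro closed_Collect_eq continuous_intros)

lemma equidistant_set_Int_eq_empty:
  assumes "closed K" "K \<noteq> {}" "K \<inter> L = {}"
  shows "equidistant_set K L \<inter> L = {}"
proof -
  have "infdist p L < infdist p K" if "p \<in> L" for p
  proof -
    have "p \<notin> K"
      using that assms(3) by blast
    then show ?thesis
      using that assms(1,2) infdist_pos_not_in_closed by simp
  qed
  then show ?thesis
    unfolding equidistant_set_def by force
qed

lemma equidistant_set_fibre_between:
  fixes K L :: "('a::metric_space \<times> real) set"
  assumes "a \<le> b"
    and "infdist (x, a) K \<le> infdist (x, a) L"
    and "infdist (x, b) L \<le> infdist (x, b) K"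
  shows "\<exists>y\<in>{a..b}. (x, y) \<in> equidistant_set K L"
proof -
  define h where "h y = infdist (x, y) K - infdist (x, y) L" for y
  have "continuous_on {a..b} h"
    unfolding h_def by (intro continuous_intros)
  then obtain y where "y \<in> {a..b}" "h y = 0"
    using IVT'[of h a 0 b] assms by (auto simp: h_def)
  then show ?thesis
    by (auto simp: h_def equidistant_set_def)
qed

lemma infdist_epigraph_ge:
  fixes f :: "'a::metric_space \<Rightarrow> real"
  assumes f_nonneg: "\<And>z. 0 \<le> f z"
    and f_ge: "\<And>z. z \<in> ball x D \<Longrightarrow> m \<le> f z"
    and "0 \<le> D" "y \<le> 0"
  shows "min (sqrt (D\<^sup>2 + y\<^sup>2)) (m - y) \<le> infdist (x, y) {(z, w). f z \<le> w}"
proof -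
  have "min (sqrt (D\<^sup>2 + y\<^sup>2)) (m - y) \<le> dist (x, y) (z, w)" if "f z \<le> w" for z w
  proof (cases "z \<in> ball x D")
    case True
    then have "m - y \<le> dist y w"
      using f_ge[OF True] that abs_ge_minus_self[of "y - w"] by (simp add: dist_real_def)
    also have "\<dots> \<le> dist (x, y) (z, w)"
      using dist_snd_le[of "(x, y)" "(z, w)"] by simp
    finally show ?thesis
      by simp
  next
    case False
    then have "D\<^sup>2 \<le> (dist x z)\<^sup>2"
      using \<open>0 \<le> D\<close> by (simp add: power_mono)
    moreover have "\<bar>y\<bar> \<le> \<bar>y - w\<bar>"
      using f_nonneg[of z] that \<open>y \<le> 0\<close> by arith
    then have "y\<^sup>2 \<le> (dist y w)\<^sup>2"
      by (simp add: dist_real_def abs_le_square_iff)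
    ultimately have "sqrt (D\<^sup>2 + y\<^sup>2) \<le> dist (x, y) (z, w)"
      by (simp add: dist_Pair_Pair)
    then show ?thesis
      by simp
  qed
  moreover have "{(z, w). f z \<le> w} \<noteq> {}"
    by auto
  ultimately show ?thesis
    by (auto simp: infdist_notempty intro!: cINF_greatest)
qed

lemma infdist_le_sqrt_below_point:
  fixes K :: "('a::metric_space \<times> real) set"
  assumes "(xs, ys) \<in> K" "dist x xs \<le> R" "y \<le> ys" "ys \<le> 0"
  shows "infdist (x, y) K \<le> sqrt (R\<^sup>2 + y\<^sup>2)"
proof -
  have "\<bar>y - ys\<bar> \<le> \<bar>y\<bar>"
    using assms(3,4) by arith
  then have "(dist y ys)\<^sup>2 \<le> y\<^sup>2"
    by (simp add: dist_real_def abs_le_square_iff)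
  moreover have "(dist x xs)\<^sup>2 \<le> R\<^sup>2"
    using assms(2) by (simp add: power_mono)
  ultimately have "dist (x, y) (xs, ys) \<le> sqrt (R\<^sup>2 + y\<^sup>2)"
    by (simp add: dist_Pair_Pair)
  then show ?thesis
    using infdist_le[OF assms(1), of "(x, y)"] by linarith
qed

lemma sqrt_add_square_lt_diff:
  fixes m R y :: real
  assumes "0 < m" "y \<le> 0" "y < - R\<^sup>2 / (2 * m)"
  shows "sqrt (R\<^sup>2 + y\<^sup>2) < m - y"
proof (rule real_less_lsqrt)
  have "R\<^sup>2 < 2 * m * (- y)"
    using assms(1,3) by (simp add: field_simps)
  moreover have "(m - y)\<^sup>2 = m\<^sup>2 + 2 * m * (- y) + y\<^sup>2"
    by (simp add: power2_eq_square algebra_simps)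
  moreover have "0 < m\<^sup>2"
    using assms(1) by simp
  ultimately show "R\<^sup>2 + y\<^sup>2 < (m - y)\<^sup>2"
    by linarith
qed (use assms in simp)

lemma infdist_lt_infdist_epigraph_below:
  fixes f :: "'a::heine_borel \<Rightarrow> real"
  assumes f_cont: "continuous_on UNIV f"
    and f_pos: "\<And>z. 0 < f z"
    and K_pt: "(xs, ys) \<in> K" "ys \<le> 0"
    and C: "bounded C"
  shows "\<exists>M. \<forall>x\<in>C. \<forall>y\<le>M. infdist (x, y) K < infdist (x, y) {(z, w). f z \<le> w}"
proof -
  obtain e where e: "\<forall>x\<in>C. dist xs x \<le> e"
    using C bounded_any_center by blast
  define R where "R = max e 0"
  obtain m where m: "0 < m" "\<And>z. z \<in> cball xs (2 * R + 1) \<Longrightarrow> m \<le> f z"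
  proof -
    have "cball xs (2 * R + 1) \<noteq> {}"
      by (simp add: R_def)
    then obtain zm where "\<forall>z\<in>cball xs (2 * R + 1). f zm \<le> f z"
      using continuous_attains_inf[OF compact_cball _ continuous_on_subset[OF f_cont subset_UNIV]]
      by blast
    then show ?thesis
      using that f_pos by blast
  qed
  \<comment> \<open>Below height \<open>M\<close>, \<open>d((x,y),K) \<le> sqrt (R\<^sup>2 + y\<^sup>2)\<close>, which is less than \<open>m - y\<close>, a lower
    bound for the distance to the part of the epigraph over \<open>ball x (R + 1)\<close>.\<close>
  define M where "M = min ys (- R\<^sup>2 / (2 * m)) - 1"
  have "infdist (x, y) K < infdist (x, y) {(z, w). f z \<le> w}" if x: "x \<in> C" and y: "y \<le> M" for x y
  proof -
    have dx: "dist x xs \<le> R"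
      using e x unfolding R_def by (metis dist_commute max.coboundedI1)
    have y_lt: "y < - R\<^sup>2 / (2 * m)" "y \<le> ys"
      using y by (auto simp: M_def)
    have "infdist (x, y) K \<le> sqrt (R\<^sup>2 + y\<^sup>2)"
      by (rule infdist_le_sqrt_below_point[OF K_pt(1) dx y_lt(2) K_pt(2)])
    also have "\<dots> < min (sqrt ((R + 1)\<^sup>2 + y\<^sup>2)) (m - y)"
      using sqrt_add_square_lt_diff[OF m(1) _ y_lt(1)] y_lt(2) K_pt(2)
      by (simp add: R_def power_strict_mono)
    also have "\<dots> \<le> infdist (x, y) {(z, w). f z \<le> w}"
    proof (rule infdist_epigraph_ge)
      show "z \<in> ball x (R + 1) \<Longrightarrow> m \<le> f z" for z
        using dx m(2)[of z] dist_triangle[of xs z x] by (simp add: dist_commute)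
    qed (use f_pos less_imp_le y_lt K_pt(2) R_def in auto)
    finally show ?thesis .
  qed
  then show ?thesis
    by blast
qed

lemma equidistant_set_epigraph_fibre_nonempty:
  fixes K :: "('a::metric_space \<times> real) set"
  assumes "\<exists>M. \<forall>y\<le>M. infdist (x, y) K < infdist (x, y) {(z, w). f z \<le> w}"
  shows "\<exists>y. (x, y) \<in> equidistant_set K {(z, w). f z \<le> w}"
proof -
  obtain M where M: "\<forall>y\<le>M. infdist (x, y) K < infdist (x, y) {(z, w). f z \<le> w}"
    using assms by blast
  have lo: "infdist (x, min M (f x)) K \<le> infdist (x, min M (f x)) {(z, w). f z \<le> w}"
    using M[rule_format, of "min M (f x)"] by simp
  have hi: "infdist (x, f x) {(z, w). f z \<le> w} \<le> infdist (x, f x) K"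
    by (simp add: infdist_nonneg)
  show ?thesis
    using equidistant_set_fibre_between[OF _ lo hi] by auto
qed

lemma bdd_above_equidistant_set_epigraph:
  fixes f :: "'a::metric_space \<Rightarrow> real"
  assumes "continuous_on UNIV f" "compact C"
    and "closed K" "K \<noteq> {}" "K \<inter> {(z, w). f z \<le> w} = {}"
  shows "bdd_above (snd ` (equidistant_set K {(z, w). f z \<le> w} \<inter> C \<times> UNIV))"
proof -
  have "bdd_above (f ` C)"
    using assms(1,2) by (meson bounded_imp_bdd_above compact_imp_bounded
        compact_continuous_image continuous_on_subset subset_UNIV)
  then obtain b where b: "\<forall>x\<in>C. f x \<le> b"
    by (auto simp: bdd_above_def)
  have "y \<le> b" if "(x, y) \<in> equidistant_set K {(z, w). f z \<le> w}" "x \<in> C" for x y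
  proof -
    have "y < f x"
      using that(1) equidistant_set_Int_eq_empty[OF assms(3-5)] by force
    then show ?thesis
      using b that(2) by fastforce
  qed
  then show ?thesis
    unfolding bdd_above_def by (intro exI[of _ b]) auto
qed

lemma bdd_below_equidistant_set:
  fixes K L :: "('a::metric_space \<times> real) set"
  assumes "\<exists>M. \<forall>x\<in>C. \<forall>y\<le>M. infdist (x, y) K < infdist (x, y) L"
  shows "bdd_below (snd ` (equidistant_set K L \<inter> C \<times> UNIV))"
proof -
  obtain M where M: "\<forall>x\<in>C. \<forall>y\<le>M. infdist (x, y) K < infdist (x, y) L"
    using assms by blast
  have "M \<le> y" if "(x, y) \<in> equidistant_set K L" "x \<in> C" for x y
  proof (rule ccontr)
    assume "\<not> M \<le> y"
    then have "infdist (x, y) K < infdist (x, y) L"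
      using M that(2) by auto
    with that(1) show False
      by (simp add: equidistant_set_def)
  qed
  then show ?thesis
    unfolding bdd_below_def by (intro exI[of _ M]) auto
qed

theorem corollary4:
  fixes f :: "real ^ 'n \<Rightarrow> real"
    and K L :: "((real ^ 'n) \<times> real) set"
  assumes f_cont: "continuous_on UNIV f"
    and f_pos: "\<And>x. f x > 0"
    and L_def: "L = {(x, y). f x \<le> y}"
    and K_ne: "K \<noteq> {}"
    and K_closed: "closed K"
    and KL_disj: "K \<inter> L = {}"
    and K_low: "\<exists>xs ys. (xs, ys) \<in> K \<and> ys \<le> 0"
  shows "upper_semicontinuous (G_plus K L) \<and> lower_semicontinuous (G_minus K L)"
proof -
  obtain xs ys where K_pt: "(xs, ys) \<in> K" "ys \<le> 0"
    using K_low by blast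
  define E where "E = equidistant_set K L"
  have below: "\<exists>M. \<forall>x\<in>C. \<forall>y\<le>M. infdist (x, y) K < infdist (x, y) L" if "compact C" for C
    unfolding L_def using f_cont f_pos K_pt compact_imp_bounded[OF that]
    by (rule infdist_lt_infdist_epigraph_below)
  have fibre_ne: "\<exists>y. (x, y) \<in> E" for x
    using below[of "{x}"] unfolding E_def L_def
    by (intro equidistant_set_epigraph_fibre_nonempty) simp
  have bdd_above: "bdd_above (snd ` (E \<inter> C \<times> UNIV))" if "compact C" for C
    unfolding E_def L_def using f_cont that K_closed K_ne KL_disj[unfolded L_def]
    by (rule bdd_above_equidistant_set_epigraph)
  have bdd_below: "bdd_below (snd ` (E \<inter> C \<times> UNIV))" if "compact C" for C
    using below[OF that] unfolding E_def by (rule bdd_below_equidistant_set)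
  have "G_plus K L = (\<lambda>x. Sup {y. (x, y) \<in> E})" "G_minus K L = (\<lambda>x. Inf {y. (x, y) \<in> E})"
    by (simp_all add: fun_eq_iff G_plus_def G_minus_def E_def equidistant_set_def)
  then show ?thesis
    using upper_semicontinuous_Sup_fibres[OF _ fibre_ne bdd_above]
      lower_semicontinuous_Inf_fibres[OF _ fibre_ne bdd_below]
    by (simp add: E_def closed_equidistant_set)
qed

end
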